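(* Let $L\ge 2$ and let $S=(d,N_1,\dots,N_{L-1},1)$ be a neural network architecture. Let $\varrho:\mathbb{R}\to\mathbb{R}$ satisfy: (i) $\varrho$ is continuous and increasing; (ii) there is $x_0\in\mathbb{R}$ such that $\varrho$ is differentiable at $x_0$ with $\varrho'(x_0)\ne 0$; (iii) there is $r>0$ such that $\varrho|_{(-\infty,-r)\cup(r,\infty)}$ is differentiable; (iv) at least one of: (a) there are $\lambda,\lambda'\ge 0$ with $\lambda\ne\lambda'$ such that $\varrho'(x)\to\lambda$ as $x\to\infty$ and $\varrho'(x)\to\lambda'$ as $x\to-\infty$, and $N_{L-1}\ge 2$; or (b) $\varrho$ is bounded. Let $B>0$ and let $\mu$ be a finite Borel measure on $[-B,B]^d$ whose support $\operatorname{supp}\mu$ is uncountable. Then $\mathcal{RNN}_\varrho^{[-B,B]^d}(S)$ is not closed in $L^p(\mu)$ for any $p\in(0,\infty)$. More precisely, there is $f\in L^\infty(\mu)$ such that, for every $p\in(0,\infty)$, $f$ belongs to the closure of $\mathcal{RNN}_\varrho^{[-B,B]^d}(S)$ in $L^p(\mu)$ but $f\notin\mathcal{RNN}_\varrho^{[-B,B]^d}(S)$.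
   Context: A neural network with architecture $S=(N_0,\dots,N_L)$ ($N_0=d$) is a family $\Phi=((A_\ell,b_\ell))_{\ell=1}^L$, $A_\ell\in\mathbb{R}^{N_\ell\times N_{\ell-1}}$, $b_\ell\in\mathbb{R}^{N_\ell}$; $\mathcal{NN}(S)$ is the set of these. For $\varrho:\mathbb{R}\to\mathbb{R}$ and $\Omega\subset\mathbb{R}^d$, $\mathrm{R}_\varrho^\Omega(\Phi):\Omega\to\mathbb{R}^{N_L}$, $x\mapsto x_L$, where $x_0=x$, $x_\ell=\varrho(A_\ell x_{\ell-1}+b_\ell)$ for $1\le\ell\le L-1$ (componentwise), $x_L=A_Lx_{L-1}+b_L$; $\mathcal{RNN}_\varrho^\Omega(S)=\{\mathrm{R}_\varrho^\Omega(\Phi):\Phi\in\mathcal{NN}(S)\}$, regarded as a subset of $L^p(\mu)$ (functions identified $\mu$-a.e.). *)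

theory Defs
  imports "HOL-Analysis.Analysis"
begin

definition aff :: "nat \<Rightarrow> (nat \<Rightarrow> nat \<Rightarrow> real) \<Rightarrow> (nat \<Rightarrow> real) \<Rightarrow> (nat \<Rightarrow> real) \<Rightarrow> (nat \<Rightarrow> real)" where
  "aff n_in A b y = (\<lambda>i. (\<Sum>j<n_in. A i j * y j) + b i)"

text \<open>Evaluation of layers 2..L. The list of widths is [N_1,...,N_{L-1}]; the layer list
  has length L-1; the last layer is affine with scalar output (component 0, N_L = 1).\<close>
fun hidden_eval :: "(real \<Rightarrow> real) \<Rightarrow> nat list \<Rightarrow> ((nat \<Rightarrow> nat \<Rightarrow> real) \<times> (nat \<Rightarrow> real)) list
     \<Rightarrow> (nat \<Rightarrow> real) \<Rightarrow> real" where
  "hidden_eval \<rho> [n] [(A, b)] y = aff n A b y 0"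
| "hidden_eval \<rho> (n # m # ns) ((A, b) # \<Phi>) y = hidden_eval \<rho> (m # ns) \<Phi> (\<lambda>i. \<rho> (aff n A b y i))"
| "hidden_eval \<rho> _ _ y = 0"

text \<open>Realization of a network with architecture (d, N_1, ..., N_{L-1}, 1), d = CARD('d).
  First layer (A1, b1) maps R^d to R^{N_1}.\<close>
definition realization :: "(real \<Rightarrow> real) \<Rightarrow> nat list \<Rightarrow> (nat \<Rightarrow> 'd::finite \<Rightarrow> real) \<Rightarrow> (nat \<Rightarrow> real)
     \<Rightarrow> ((nat \<Rightarrow> nat \<Rightarrow> real) \<times> (nat \<Rightarrow> real)) list \<Rightarrow> real^'d \<Rightarrow> real" where
  "realization \<rho> Ns A1 b1 \<Phi> x =
     hidden_eval \<rho> Ns \<Phi> (\<lambda>i. \<rho> ((\<Sum>j\<in>UNIV. A1 i j * x $ j) + b1 i))"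

definition RNN :: "(real \<Rightarrow> real) \<Rightarrow> nat list \<Rightarrow> (real^'d::finite \<Rightarrow> real) set" where
  "RNN \<rho> Ns = {realization \<rho> Ns A1 b1 \<Phi> | A1 b1 \<Phi>. length \<Phi> = length Ns}"

definition cube :: "real \<Rightarrow> (real^'d::finite) set" where
  "cube B = {x. \<forall>j. \<bar>x $ j\<bar> \<le> B}"

definition measure_support :: "('a::metric_space) measure \<Rightarrow> 'a set" where
  "measure_support \<mu> = {x. \<forall>e>0. emeasure \<mu> (ball x e) > 0}"

end

theory Submission
  imports Defs
begin

text \<open>Choose a combination \<open>\<phi> = c0 + (\<Sum>k<K. c k * \<rho> (_ + e k))\<close> with \<open>K \<le> N\<^sub>L\<^sub>-\<^sub>1\<close> and
  distinct limits \<open>a \<noteq> b\<close> at \<open>-\<infinity>\<close> and \<open>+\<infinity>\<close>: in case (a) \<open>\<rho> (_ + 1) - \<rho>\<close>, whose limits are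
  those of \<open>\<rho>'\<close> by the mean value theorem; in case (b) \<open>\<rho>\<close> itself, a bounded monotone function that
  is not constant because \<open>\<rho>'(x0) \<noteq> 0\<close>. Since the support of \<open>\<mu>\<close> is uncountable, some point
  \<open>xs\<close> of it is approached by points of the support from both sides in some coordinate \<open>j\<close>.
  The step function \<open>f\<close> that equals \<open>b\<close> where \<open>x\<^sub>j > xs\<^sub>j\<close> and \<open>a\<close> where \<open>x\<^sub>j < xs\<^sub>j\<close> is
  the pointwise limit of \<open>\<phi> (n (x\<^sub>j - xs\<^sub>j))\<close>, and each of these is uniformly approximated on the
  cube by networks: a neuron \<open>\<rho> (x0 + h s)\<close> is an approximate identity, so a single coordinate can
  be passed through any number of hidden layers. Dominated convergence puts \<open>f\<close> into the
  \<open>L\<^sup>p\<close>-closure for every \<open>p\<close>, whereas a realization is continuous, and one that agrees with \<open>f\<close>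
  almost everywhere would take both values \<open>a\<close> and \<open>b\<close> at \<open>xs\<close>.\<close>

definition shallow_net ::
    "(real \<Rightarrow> real) \<Rightarrow> nat \<Rightarrow> real \<Rightarrow> (nat \<Rightarrow> real) \<Rightarrow> (nat \<Rightarrow> real) \<Rightarrow> (nat \<Rightarrow> real) \<Rightarrow> real \<Rightarrow> real"
  where "shallow_net \<rho> K c0 c \<alpha> \<beta> s = c0 + (\<Sum>k<K. c k * \<rho> (\<alpha> k * s + \<beta> k))"

lemma shallow_net_affine_input:
  "shallow_net \<rho> K c0 c (\<lambda>k. \<alpha> k * a) (\<lambda>k. \<alpha> k * b + \<beta> k) s = shallow_net \<rho> K c0 c \<alpha> \<beta> (a * s + b)"
  unfolding shallow_net_def by (simp add: algebra_simps)

lemma continuous_on_shallow_net: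
  assumes "continuous_on UNIV \<rho>"
  shows "continuous_on UNIV (shallow_net \<rho> K c0 c \<alpha> \<beta>)"
  unfolding shallow_net_def
  by (intro continuous_intros continuous_on_compose2[OF assms]) auto

lemma difference_quotient_uniform_approx:
  fixes \<rho> :: "real \<Rightarrow> real"
  assumes der: "(\<rho> has_real_derivative D) (at x0)" and D: "D \<noteq> 0" and \<eta>: "\<eta> > 0"
  shows "\<exists>h>0. \<forall>s. \<bar>s\<bar> \<le> R \<longrightarrow> \<bar>(\<rho> (x0 + h * s) - \<rho> x0) / (h * D) - s\<bar> < \<eta>"
proof -
  define r where "r = \<eta> * \<bar>D\<bar> / (\<bar>R\<bar> + 1)"
  have "r > 0" using \<eta> D by (simp add: r_def)
  moreover have "(\<lambda>u. (\<rho> (x0 + u) - \<rho> x0) / u) \<midarrow>0\<rightarrow> D"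
    using der by (simp add: DERIV_def)
  ultimately obtain d where d: "d > 0"
    and quot: "\<And>u. u \<noteq> 0 \<Longrightarrow> \<bar>u\<bar> < d \<Longrightarrow> \<bar>(\<rho> (x0 + u) - \<rho> x0) / u - D\<bar> < r"
    unfolding LIM_eq by (metis real_norm_def diff_zero)
  define h where "h = d / (\<bar>R\<bar> + 1)"
  have h: "h > 0" using d by (simp add: h_def)
  have "\<bar>(\<rho> (x0 + h * s) - \<rho> x0) / (h * D) - s\<bar> < \<eta>" if s: "\<bar>s\<bar> \<le> R" for s
  proof (cases "s = 0")
    case True
    then show ?thesis using \<eta> by simp
  next
    case False
    define u where "u = h * s"
    have "u \<noteq> 0" using False h by (simp add: u_def)
    have "\<bar>u\<bar> \<le> h * \<bar>R\<bar>" using s h by (simp add: u_def abs_mult)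
    also have "\<dots> < d" using d by (simp add: h_def field_simps)
    finally have "\<bar>(\<rho> (x0 + u) - \<rho> x0) / u - D\<bar> < r" by (rule quot[OF \<open>u \<noteq> 0\<close>])
    moreover have "(\<rho> (x0 + h * s) - \<rho> x0) / (h * D) - s = ((\<rho> (x0 + u) - \<rho> x0) / u - D) * s / D"
      using \<open>u \<noteq> 0\<close> h D by (simp add: u_def field_simps)
    ultimately have "\<bar>(\<rho> (x0 + h * s) - \<rho> x0) / (h * D) - s\<bar> \<le> r * \<bar>R\<bar> / \<bar>D\<bar>"
      using s D by (simp add: abs_mult divide_right_mono mult_mono)
    also have "\<dots> = \<eta> * (\<bar>R\<bar> / (\<bar>R\<bar> + 1))" using D by (simp add: r_def)
    also have "\<dots> < \<eta>" using \<eta> by (simp add: field_simps)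
    finally show ?thesis .
  qed
  then show ?thesis using h by blast
qed

text \<open>As \<open>(\<rho> (x0 + h s) - \<rho> x0) / (h D) \<rightarrow> s\<close> uniformly on \<open>[-R, R]\<close>, the neuron \<open>\<rho> (x0 + h s)\<close>
  is an approximate identity that the next layer undoes by rescaling its weights.\<close>
lemma shallow_net_absorbs_neuron:
  fixes \<rho> :: "real \<Rightarrow> real"
  assumes cont: "continuous_on UNIV \<rho>" and der: "(\<rho> has_real_derivative D) (at x0)"
    and D: "D \<noteq> 0" and \<epsilon>: "\<epsilon> > 0"
  shows "\<exists>h>0. \<forall>s. \<bar>s\<bar> \<le> R \<longrightarrow>
     \<bar>shallow_net \<rho> K c0 c (\<lambda>k. \<alpha> k / (h * D)) (\<lambda>k. \<beta> k - \<alpha> k * \<rho> x0 / (h * D))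
        (\<rho> (x0 + h * s)) - shallow_net \<rho> K c0 c \<alpha> \<beta> s\<bar> \<le> \<epsilon>"
proof -
  let ?T = "shallow_net \<rho> K c0 c \<alpha> \<beta>"
  have "uniformly_continuous_on {-(\<bar>R\<bar> + 1)..\<bar>R\<bar> + 1} ?T"
    by (intro compact_uniformly_continuous continuous_on_subset[OF continuous_on_shallow_net[OF cont]]) auto
  then obtain \<delta> where \<delta>: "\<delta> > 0" and unif: "\<And>q s. q \<in> {-(\<bar>R\<bar> + 1)..\<bar>R\<bar> + 1} \<Longrightarrow>
      s \<in> {-(\<bar>R\<bar> + 1)..\<bar>R\<bar> + 1} \<Longrightarrow> dist q s < \<delta> \<Longrightarrow> dist (?T q) (?T s) < \<epsilon>"
    using \<epsilon> unfolding uniformly_continuous_on_def by metis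
  obtain h where h: "h > 0" and quot: "\<And>s. \<bar>s\<bar> \<le> R \<Longrightarrow>
      \<bar>(\<rho> (x0 + h * s) - \<rho> x0) / (h * D) - s\<bar> < min \<delta> 1"
    using difference_quotient_uniform_approx[OF der D, of "min \<delta> 1" R] \<delta> by auto
  have "\<bar>?T ((\<rho> (x0 + h * s) - \<rho> x0) / (h * D)) - ?T s\<bar> \<le> \<epsilon>" if s: "\<bar>s\<bar> \<le> R" for s
  proof -
    define q where "q = (\<rho> (x0 + h * s) - \<rho> x0) / (h * D)"
    have "\<bar>q - s\<bar> < min \<delta> 1" using quot[OF s] by (simp add: q_def)
    then have "dist (?T q) (?T s) < \<epsilon>" using s by (intro unif) (auto simp: dist_real_def)
    then show ?thesis by (simp add: q_def dist_real_def)
  qed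
  moreover have "shallow_net \<rho> K c0 c (\<lambda>k. \<alpha> k / (h * D)) (\<lambda>k. \<beta> k - \<alpha> k * \<rho> x0 / (h * D)) v
      = ?T ((v - \<rho> x0) / (h * D))" for v
    using shallow_net_affine_input[of \<rho> K c0 c \<alpha> "1 / (h * D)" "- \<rho> x0 / (h * D)" \<beta> v]
    by (simp add: diff_divide_distrib)
  ultimately show ?thesis using h by auto
qed

lemma aff_select: "i0 < n \<Longrightarrow> aff n (\<lambda>i j. if j = i0 then w i else 0) b y = (\<lambda>i. w i * y i0 + b i)"
  by (simp add: aff_def if_distrib[of "\<lambda>x. x * _"] cong: if_cong)

lemma hidden_eval_two_layers:
  assumes "i0 < n" "K \<le> m"
  shows "hidden_eval \<rho> [n, m] [(\<lambda>i j. if j = i0 then \<alpha> i else 0, \<beta>), (\<lambda>i j. if j < K then c j else 0, \<lambda>_. c0)] y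
    = shallow_net \<rho> K c0 c \<alpha> \<beta> (y i0)"
proof -
  have "{..<m} \<inter> {j. j < K} = {..<K}" using assms(2) by auto
  then show ?thesis
    using assms by (simp add: aff_def shallow_net_def if_distrib[of "\<lambda>x. x * _"] sum.If_cases cong: if_cong)
qed

text \<open>Every layer but the last two carries coordinate \<open>i0\<close> through approximate-identity neurons;
  the last two realize the shallow net exactly.\<close>
lemma hidden_eval_approximates_shallow_net:
  fixes \<rho> :: "real \<Rightarrow> real"
  assumes cont: "continuous_on UNIV \<rho>" and der: "(\<rho> has_real_derivative D) (at x0)" and D: "D \<noteq> 0"
  shows "\<forall>w\<in>set (m # ms). 0 < w \<Longrightarrow> K \<le> last (m # ms) \<Longrightarrow> i0 < n \<Longrightarrow> \<epsilon> > 0 \<Longrightarrow>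
    \<exists>\<Phi>. length \<Phi> = length (n # m # ms) \<and>
      (\<forall>y. \<bar>y i0\<bar> \<le> R \<longrightarrow> \<bar>hidden_eval \<rho> (n # m # ms) \<Phi> y - shallow_net \<rho> K c0 c \<alpha> \<beta> (y i0)\<bar> \<le> \<epsilon>)"
proof (induction ms arbitrary: n m i0 R \<epsilon> \<alpha> \<beta>)
  case Nil
  let ?\<Phi> = "[(\<lambda>i j. if j = i0 then \<alpha> i else 0, \<beta>), (\<lambda>i j. if j < K then c j else 0, \<lambda>_. c0)]"
  have "hidden_eval \<rho> [n, m] ?\<Phi> y = shallow_net \<rho> K c0 c \<alpha> \<beta> (y i0)" for y
    using Nil.prems by (intro hidden_eval_two_layers) auto
  then show ?case using Nil.prems by (intro exI[of _ ?\<Phi>]) auto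
next
  case (Cons m' ms)
  define \<alpha>' where "\<alpha>' h k = \<alpha> k / (h * D)" for h k
  define \<beta>' where "\<beta>' h k = \<beta> k - \<alpha> k * \<rho> x0 / (h * D)" for h k
  obtain h where h: "h > 0" and absorb: "\<And>s. \<bar>s\<bar> \<le> R \<Longrightarrow>
      \<bar>shallow_net \<rho> K c0 c (\<alpha>' h) (\<beta>' h) (\<rho> (x0 + h * s)) - shallow_net \<rho> K c0 c \<alpha> \<beta> s\<bar> \<le> \<epsilon> / 2"
    using shallow_net_absorbs_neuron[OF cont der D, of "\<epsilon> / 2" R K c0 c \<alpha> \<beta>] Cons.prems
    unfolding \<alpha>'_def \<beta>'_def by auto
  have "compact ((\<lambda>s. \<rho> (x0 + h * s)) ` {-R..R})"
    by (intro compact_continuous_image continuous_on_compose2[OF cont]) (auto intro!: continuous_intros)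
  then obtain R' where R': "\<And>s. \<bar>s\<bar> \<le> R \<Longrightarrow> \<bar>\<rho> (x0 + h * s)\<bar> \<le> R'"
    by (fastforce dest!: compact_imp_bounded simp: bounded_iff)
  have "\<exists>\<Phi>. length \<Phi> = length (m # m' # ms) \<and> (\<forall>z. \<bar>z 0\<bar> \<le> R' \<longrightarrow>
      \<bar>hidden_eval \<rho> (m # m' # ms) \<Phi> z - shallow_net \<rho> K c0 c (\<alpha>' h) (\<beta>' h) (z 0)\<bar> \<le> \<epsilon> / 2)"
    using Cons.prems by (intro Cons.IH) auto
  then obtain \<Phi> where len: "length \<Phi> = length (m # m' # ms)" and \<Phi>: "\<And>z. \<bar>z 0\<bar> \<le> R' \<Longrightarrow>
      \<bar>hidden_eval \<rho> (m # m' # ms) \<Phi> z - shallow_net \<rho> K c0 c (\<alpha>' h) (\<beta>' h) (z 0)\<bar> \<le> \<epsilon> / 2"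
    by blast
  let ?A = "\<lambda>i j. if j = i0 then h else 0"
  have eval: "hidden_eval \<rho> (n # m # m' # ms) ((?A, \<lambda>_. x0) # \<Phi>) y
      = hidden_eval \<rho> (m # m' # ms) \<Phi> (\<lambda>_. \<rho> (x0 + h * y i0))" for y
    using Cons.prems by (simp add: aff_select add.commute)
  have "\<bar>hidden_eval \<rho> (n # m # m' # ms) ((?A, \<lambda>_. x0) # \<Phi>) y - shallow_net \<rho> K c0 c \<alpha> \<beta> (y i0)\<bar> \<le> \<epsilon>"
    if y: "\<bar>y i0\<bar> \<le> R" for y
    using \<Phi>[of "\<lambda>_. \<rho> (x0 + h * y i0)", OF R'[OF y]] absorb[OF y] unfolding eval by linarith
  then show ?case using len by (intro exI[of _ "(?A, \<lambda>_. x0) # \<Phi>"]) auto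
qed

lemma realization_coordinate_input:
  "realization \<rho> (n # ms) (\<lambda>i j'. if j' = j then A i 0 else 0) b \<Phi> x
     = hidden_eval \<rho> (1 # n # ms) ((A, b) # \<Phi>) (\<lambda>_. x $ j)"
  by (simp add: realization_def aff_def if_distrib[of "\<lambda>x. x * _"] cong: if_cong)

lemma RNN_approximates_shallow_net:
  fixes \<rho> :: "real \<Rightarrow> real" and j :: "'d::finite"
  assumes cont: "continuous_on UNIV \<rho>" and der: "(\<rho> has_real_derivative D) (at x0)" and D: "D \<noteq> 0"
    and Ns: "Ns \<noteq> []" "\<forall>n\<in>set Ns. 0 < n" and K: "K \<le> last Ns" and \<epsilon>: "\<epsilon> > 0"
  shows "\<exists>g\<in>RNN \<rho> Ns. \<forall>x::real^'d. \<bar>x $ j\<bar> \<le> R \<longrightarrow> \<bar>g x - shallow_net \<rho> K c0 c \<alpha> \<beta> (x $ j)\<bar> \<le> \<epsilon>"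
proof -
  obtain n ms where Ns_eq: "Ns = n # ms" using Ns(1) by (cases Ns) auto
  obtain \<Phi> where len: "length \<Phi> = length (1 # n # ms)" and approx: "\<And>y. \<bar>y 0\<bar> \<le> R \<Longrightarrow>
      \<bar>hidden_eval \<rho> (1 # n # ms) \<Phi> y - shallow_net \<rho> K c0 c \<alpha> \<beta> (y 0)\<bar> \<le> \<epsilon>"
    using hidden_eval_approximates_shallow_net[OF cont der D, of n ms K 0 1 \<epsilon> R c0 c \<alpha> \<beta>] Ns K \<epsilon>
    unfolding Ns_eq by auto
  then obtain A b \<Phi>' where \<Phi>: "\<Phi> = (A, b) # \<Phi>'" by (cases \<Phi>) auto
  let ?g = "realization \<rho> Ns (\<lambda>i j'. if j' = j then A i 0 else 0) b \<Phi>'"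
  have "?g \<in> RNN \<rho> Ns" using len unfolding RNN_def \<Phi> Ns_eq by auto
  moreover have "\<bar>?g x - shallow_net \<rho> K c0 c \<alpha> \<beta> (x $ j)\<bar> \<le> \<epsilon>" if "\<bar>x $ j\<bar> \<le> R" for x :: "real^'d"
    using approx[of "\<lambda>_. x $ j"] that unfolding Ns_eq realization_coordinate_input \<Phi> by simp
  ultimately show ?thesis by blast
qed

lemma isCont_hidden_eval: "continuous_on UNIV \<rho> \<Longrightarrow> isCont (hidden_eval \<rho> Ns \<Phi>) y"
proof (induction \<rho> Ns \<Phi> y rule: hidden_eval.induct)
  case (1 \<rho> n A b y)
  have "continuous_on UNIV (\<lambda>y. aff n A b y 0)"
    unfolding aff_def by (intro continuous_intros continuous_on_product_coordinates)
  then show ?case by (simp add: continuous_on_eq_continuous_at)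
next
  case (2 \<rho> n m ns A b \<Phi> y)
  have "continuous_on UNIV (\<lambda>y. aff n A b y i)" for i
    unfolding aff_def by (intro continuous_intros continuous_on_product_coordinates)
  then have "continuous_on UNIV (\<lambda>y i. \<rho> (aff n A b y i))"
    by (intro continuous_on_coordinatewise_then_product continuous_on_compose2[OF "2.prems"]) auto
  then have "isCont (\<lambda>y i. \<rho> (aff n A b y i)) y"
    by (simp add: continuous_on_eq_continuous_at)
  with 2 show ?case using continuous_at_compose[of y "\<lambda>y i. \<rho> (aff n A b y i)"] by (simp add: o_def)
qed (auto simp: continuous_at_eps_delta)

lemma RNN_continuous:
  fixes g :: "real^'d::finite \<Rightarrow> real"
  assumes cont: "continuous_on UNIV \<rho>" and g: "g \<in> RNN \<rho> Ns"
  shows "continuous_on UNIV g"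
proof -
  obtain A1 b1 \<Phi> where g_eq: "g = realization \<rho> Ns A1 b1 \<Phi>" using g unfolding RNN_def by blast
  have "continuous_on UNIV (hidden_eval \<rho> Ns \<Phi>)"
    by (simp add: continuous_at_imp_continuous_on isCont_hidden_eval[OF cont])
  moreover have "continuous_on UNIV (\<lambda>x::real^'d. \<lambda>i. \<rho> ((\<Sum>j\<in>UNIV. A1 i j * x $ j) + b1 i))"
    by (intro continuous_on_coordinatewise_then_product continuous_on_compose2[OF cont] continuous_intros) auto
  ultimately show ?thesis
    unfolding g_eq realization_def by (rule continuous_on_compose2) auto
qed

lemma bounded_range_if_tendsto_at_top_at_bot:
  fixes \<phi> :: "real \<Rightarrow> real"
  assumes cont: "continuous_on UNIV \<phi>" and top: "(\<phi> \<longlongrightarrow> b) at_top" and bot: "(\<phi> \<longlongrightarrow> a) at_bot"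
  shows "bounded (range \<phi>)"
proof -
  obtain Z1 where Z1: "\<And>z. z \<ge> Z1 \<Longrightarrow> \<phi> z \<in> ball b 1"
    using tendstoD[OF top, of 1] by (auto simp: eventually_at_top_linorder dist_commute)
  obtain Z2 where Z2: "\<And>z. z \<le> Z2 \<Longrightarrow> \<phi> z \<in> ball a 1"
    using tendstoD[OF bot, of 1] by (auto simp: eventually_at_bot_linorder dist_commute)
  have "\<phi> z \<in> \<phi> ` {Z2..Z1} \<union> ball b 1 \<union> ball a 1" for z
    using Z1[of z] Z2[of z] by (cases "z \<le> Z1"; cases "Z2 \<le> z") auto
  then have "range \<phi> \<subseteq> \<phi> ` {Z2..Z1} \<union> ball b 1 \<union> ball a 1" by blast
  moreover have "bounded (\<phi> ` {Z2..Z1})"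
    by (intro compact_imp_bounded compact_continuous_image continuous_on_subset[OF cont]) auto
  then have "bounded (\<phi> ` {Z2..Z1} \<union> ball b 1 \<union> ball a 1)" by simp
  ultimately show ?thesis by (rule bounded_subset[rotated])
qed

lemma forward_difference_tendsto:
  fixes \<rho> :: "real \<Rightarrow> real"
  assumes cont: "continuous_on UNIV \<rho>" and diff: "eventually (\<lambda>x. \<rho> differentiable (at x)) F"
    and lim: "(deriv \<rho> \<longlongrightarrow> l) F"
    and F: "\<And>P. eventually P F \<Longrightarrow> eventually (\<lambda>z. \<forall>\<xi>. z < \<xi> \<and> \<xi> < z + 1 \<longrightarrow> P \<xi>) F"
  shows "((\<lambda>z. \<rho> (z + 1) - \<rho> z) \<longlongrightarrow> l) F"
  unfolding tendsto_iff
proof (intro allI impI)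
  fix e :: real assume "e > 0"
  with diff lim have "eventually (\<lambda>\<xi>. \<rho> differentiable (at \<xi>) \<and> dist (deriv \<rho> \<xi>) l < e) F"
    by (auto intro: eventually_conj tendstoD)
  then have "eventually (\<lambda>z. \<forall>\<xi>. z < \<xi> \<and> \<xi> < z + 1 \<longrightarrow>
      \<rho> differentiable (at \<xi>) \<and> dist (deriv \<rho> \<xi>) l < e) F"
    by (rule F)
  then show "eventually (\<lambda>z. dist (\<rho> (z + 1) - \<rho> z) l < e) F"
  proof (rule eventually_mono)
    fix z assume near: "\<forall>\<xi>. z < \<xi> \<and> \<xi> < z + 1 \<longrightarrow> \<rho> differentiable (at \<xi>) \<and> dist (deriv \<rho> \<xi>) l < e"
    obtain \<xi> D where "z < \<xi>" "\<xi> < z + 1" "(\<rho> has_real_derivative D) (at \<xi>)"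
      and "\<rho> (z + 1) - \<rho> z = (z + 1 - z) * D"
      using MVT[of z "z + 1" \<rho>] near continuous_on_subset[OF cont] by auto
    then show "dist (\<rho> (z + 1) - \<rho> z) l < e" using near DERIV_imp_deriv by fastforce
  qed
qed

lemma forward_difference_tendsto_at_top_at_bot:
  fixes \<rho> :: "real \<Rightarrow> real"
  assumes cont: "continuous_on UNIV \<rho>" and diff: "\<And>x. r < \<bar>x\<bar> \<Longrightarrow> \<rho> differentiable (at x)"
    and lp: "(deriv \<rho> \<longlongrightarrow> lp) at_top" and lm: "(deriv \<rho> \<longlongrightarrow> lm) at_bot"
  shows "((\<lambda>z. \<rho> (z + 1) - \<rho> z) \<longlongrightarrow> lp) at_top" and "((\<lambda>z. \<rho> (z + 1) - \<rho> z) \<longlongrightarrow> lm) at_bot"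
proof -
  show "((\<lambda>z. \<rho> (z + 1) - \<rho> z) \<longlongrightarrow> lp) at_top"
  proof (rule forward_difference_tendsto[OF cont _ lp])
    show "eventually (\<lambda>x. \<rho> differentiable (at x)) at_top"
      using eventually_gt_at_top[of "\<bar>r\<bar>"] by eventually_elim (simp add: diff)
  next
    fix P :: "real \<Rightarrow> bool" assume "eventually P at_top"
    then obtain Z where "\<And>x. Z \<le> x \<Longrightarrow> P x" unfolding eventually_at_top_linorder by blast
    then show "eventually (\<lambda>z. \<forall>\<xi>. z < \<xi> \<and> \<xi> < z + 1 \<longrightarrow> P \<xi>) at_top"
      unfolding eventually_at_top_linorder by (intro exI[of _ Z]) auto
  qed
  show "((\<lambda>z. \<rho> (z + 1) - \<rho> z) \<longlongrightarrow> lm) at_bot"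
  proof (rule forward_difference_tendsto[OF cont _ lm])
    show "eventually (\<lambda>x. \<rho> differentiable (at x)) at_bot"
      using eventually_gt_at_bot[of "- \<bar>r\<bar>"] by eventually_elim (simp add: diff)
  next
    fix P :: "real \<Rightarrow> bool" assume "eventually P at_bot"
    then obtain Z where "\<And>x. x \<le> Z \<Longrightarrow> P x" unfolding eventually_at_bot_linorder by blast
    then show "eventually (\<lambda>z. \<forall>\<xi>. z < \<xi> \<and> \<xi> < z + 1 \<longrightarrow> P \<xi>) at_bot"
      unfolding eventually_at_bot_linorder by (intro exI[of _ "Z - 1"]) auto
  qed
qed

lemma bounded_mono_distinct_limits:
  fixes \<rho> :: "real \<Rightarrow> real"
  assumes mono: "mono \<rho>" and bnd: "bounded (range \<rho>)"
    and der: "(\<rho> has_real_derivative D) (at x0)" and D: "D \<noteq> 0"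
  shows "\<exists>a b. a \<noteq> b \<and> (\<rho> \<longlongrightarrow> b) at_top \<and> (\<rho> \<longlongrightarrow> a) at_bot"
proof -
  have bdd: "bdd_above (range \<rho>)" "bdd_below (range \<rho>)"
    using bnd by (auto intro: bounded_imp_bdd_above bounded_imp_bdd_below)
  define a where "a = Inf (range \<rho>)"
  define b where "b = Sup (range \<rho>)"
  have le_b: "\<rho> z \<le> b" and a_le: "a \<le> \<rho> z" for z
    unfolding a_def b_def using bdd by (auto intro: cSUP_upper cINF_lower)
  have "(\<rho> \<longlongrightarrow> b) at_top"
  proof (rule increasing_tendsto)
    fix y assume "y < b"
    then obtain z where "y < \<rho> z" unfolding b_def using less_cSUP_iff[of UNIV \<rho> y] bdd by auto
    then show "eventually (\<lambda>x. y < \<rho> x) at_top"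
      unfolding eventually_at_top_linorder by (meson mono monoD order_less_le_trans)
  qed (simp add: le_b)
  moreover have "(\<rho> \<longlongrightarrow> a) at_bot"
  proof (rule decreasing_tendsto)
    fix y assume "a < y"
    then obtain z where "\<rho> z < y" unfolding a_def using cINF_less_iff[of UNIV \<rho> y] bdd by auto
    then show "eventually (\<lambda>x. \<rho> x < y) at_bot"
      unfolding eventually_at_bot_linorder by (meson mono monoD order_le_less_trans)
  qed (simp add: a_le)
  moreover have "a \<noteq> b"
  proof
    assume "a = b"
    then have "\<rho> = (\<lambda>_. a)" using le_b a_le by (intro ext antisym) auto
    then have "D = 0" using der DERIV_const DERIV_unique by metis
    with D show False ..
  qed
  ultimately show ?thesis by blast
qed

lemma exists_step_like_shallow_net:
  fixes \<rho> :: "real \<Rightarrow> real"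
  assumes cont: "continuous_on UNIV \<rho>" and mono: "mono \<rho>"
    and der: "(\<rho> has_real_derivative D) (at x0)" and D: "D \<noteq> 0"
    and diff_far: "\<exists>r>0. \<forall>x. r < \<bar>x\<bar> \<longrightarrow> \<rho> differentiable (at x)"
    and Ns: "Ns \<noteq> []" "\<forall>n\<in>set Ns. 0 < n"
    and cond: "(\<exists>lp lm. 0 \<le> lp \<and> 0 \<le> lm \<and> lp \<noteq> lm \<and>
                  (deriv \<rho> \<longlongrightarrow> lp) at_top \<and> (deriv \<rho> \<longlongrightarrow> lm) at_bot \<and> 2 \<le> last Ns)
               \<or> bounded (range \<rho>)"
  shows "\<exists>K c0 c e a b. K \<le> last Ns \<and> a \<noteq> b \<and>
    (shallow_net \<rho> K c0 c (\<lambda>_. 1) e \<longlongrightarrow> b) at_top \<and> (shallow_net \<rho> K c0 c (\<lambda>_. 1) e \<longlongrightarrow> a) at_bot"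
  using cond
proof
  assume "\<exists>lp lm. 0 \<le> lp \<and> 0 \<le> lm \<and> lp \<noteq> lm \<and>
            (deriv \<rho> \<longlongrightarrow> lp) at_top \<and> (deriv \<rho> \<longlongrightarrow> lm) at_bot \<and> 2 \<le> last Ns"
  then obtain lp lm where "lp \<noteq> lm" "2 \<le> last Ns"
    and lp: "(deriv \<rho> \<longlongrightarrow> lp) at_top" and lm: "(deriv \<rho> \<longlongrightarrow> lm) at_bot"
    by blast
  obtain r where "\<And>x. r < \<bar>x\<bar> \<Longrightarrow> \<rho> differentiable (at x)" using diff_far by blast
  note limits = forward_difference_tendsto_at_top_at_bot[OF cont this lp lm]
  let ?c = "\<lambda>k. if k = 0 then 1 else -1" and ?e = "\<lambda>k. if k = 0 then 1 else 0"
  have forward: "shallow_net \<rho> 2 0 ?c (\<lambda>_. 1) ?e = (\<lambda>z. \<rho> (z + 1) - \<rho> z)"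
    by (simp add: shallow_net_def fun_eq_iff numeral_2_eq_2)
  show ?thesis
    using limits not_sym[OF \<open>lp \<noteq> lm\<close>] \<open>2 \<le> last Ns\<close> unfolding forward[symmetric] by blast
next
  assume "bounded (range \<rho>)"
  then obtain a b where "a \<noteq> b" "(\<rho> \<longlongrightarrow> b) at_top" "(\<rho> \<longlongrightarrow> a) at_bot"
    using bounded_mono_distinct_limits[OF mono _ der D] by blast
  moreover have "shallow_net \<rho> 1 0 (\<lambda>_. 1) (\<lambda>_. 1) (\<lambda>_. 0) = \<rho>"
    by (simp add: shallow_net_def fun_eq_iff)
  moreover have "1 \<le> last Ns" using Ns by (simp add: Suc_le_eq)
  ultimately show ?thesis by metis
qed

definition one_sided_in :: "(real^'d::finite) set \<Rightarrow> ('d \<Rightarrow> bool) \<Rightarrow> real \<Rightarrow> real^'d \<Rightarrow> bool" where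
  "one_sided_in S \<sigma> e x \<longleftrightarrow>
     (\<forall>j. \<forall>y\<in>S. dist y x < e \<longrightarrow> (if \<sigma> j then x $ j \<le> y $ j else y $ j \<le> x $ j))"

lemma uniform_discrete_one_sided_in:
  assumes "e > 0"
  shows "uniform_discrete {x\<in>S. one_sided_in S \<sigma> e x}"
proof (rule uniformI1[OF assms])
  fix x y assume x: "x \<in> {x\<in>S. one_sided_in S \<sigma> e x}" and y: "y \<in> {x\<in>S. one_sided_in S \<sigma> e x}"
    and xy: "dist x y < e"
  have "x $ j = y $ j" for j
  proof -
    have "if \<sigma> j then x $ j \<le> y $ j else y $ j \<le> x $ j"
      using x y xy unfolding one_sided_in_def by (simp add: dist_commute)
    moreover have "if \<sigma> j then y $ j \<le> x $ j else x $ j \<le> y $ j"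
      using x y xy unfolding one_sided_in_def by simp
    ultimately show ?thesis by (auto split: if_splits)
  qed
  then show "x = y" by (simp add: vec_eq_iff)
qed

lemma one_side_near_if_not_two_sided:
  fixes x :: "real^'d::finite"
  assumes "x \<notin> closure {y\<in>S. y $ j < x $ j} \<or> x \<notin> closure {y\<in>S. x $ j < y $ j}"
  shows "\<exists>e>0. \<exists>s. \<forall>y\<in>S. dist y x < e \<longrightarrow> (if s then x $ j \<le> y $ j else y $ j \<le> x $ j)"
  using assms
proof
  assume "x \<notin> closure {y\<in>S. y $ j < x $ j}"
  then obtain e where "e > 0" and "\<forall>y\<in>{y\<in>S. y $ j < x $ j}. \<not> dist y x < e"
    unfolding closure_approachable by blast
  then show ?thesis by (intro exI[of _ e] conjI exI[of _ True]) force+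
next
  assume "x \<notin> closure {y\<in>S. x $ j < y $ j}"
  then obtain e where "e > 0" and "\<forall>y\<in>{y\<in>S. x $ j < y $ j}. \<not> dist y x < e"
    unfolding closure_approachable by blast
  then show ?thesis by (intro exI[of _ e] conjI exI[of _ False]) force+
qed

lemma one_sided_in_if_not_two_sided:
  fixes x :: "real^'d::finite"
  assumes not_two_sided: "\<And>j. x \<notin> closure {y\<in>S. y $ j < x $ j} \<or> x \<notin> closure {y\<in>S. x $ j < y $ j}"
  shows "\<exists>\<sigma> m. one_sided_in S \<sigma> (inverse (Suc m)) x"
proof -
  have "eventually (\<lambda>m. \<exists>s. \<forall>y\<in>S. dist y x < inverse (Suc m) \<longrightarrow>
      (if s then x $ j \<le> y $ j else y $ j \<le> x $ j)) sequentially" for j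
  proof -
    obtain e s where e: "e > 0"
      and side: "\<forall>y\<in>S. dist y x < e \<longrightarrow> (if s then x $ j \<le> y $ j else y $ j \<le> x $ j)"
      using one_side_near_if_not_two_sided[OF not_two_sided[of j]] by blast
    show ?thesis
      using order_tendstoD(2)[OF LIMSEQ_inverse_real_of_nat e]
    proof eventually_elim
      case (elim m)
      show ?case using side elim order.strict_trans by (intro exI[of _ s]) blast
    qed
  qed
  then have "eventually (\<lambda>m. \<forall>j. \<exists>s. \<forall>y\<in>S. dist y x < inverse (Suc m) \<longrightarrow>
      (if s then x $ j \<le> y $ j else y $ j \<le> x $ j)) sequentially"
    by (rule eventually_all_finite)
  then obtain m where "\<forall>j. \<exists>s. \<forall>y\<in>S. dist y x < inverse (Suc m) \<longrightarrow>
      (if s then x $ j \<le> y $ j else y $ j \<le> x $ j)"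
    by (auto simp: eventually_sequentially)
  then have "\<exists>\<sigma>. \<forall>j. \<forall>y\<in>S. dist y x < inverse (Suc m) \<longrightarrow>
      (if \<sigma> j then x $ j \<le> y $ j else y $ j \<le> x $ j)"
    by (rule choice)
  then obtain \<sigma> where "one_sided_in S \<sigma> (inverse (Suc m)) x" unfolding one_sided_in_def by blast
  then show ?thesis by blast
qed

text \<open>Otherwise \<open>S\<close> is the union, over the finitely many sign patterns \<open>\<sigma>\<close> and all \<open>m\<close>, of the
  uniformly discrete, hence countable, sets \<open>{x\<in>S. one_sided_in S \<sigma> (1 / (m + 1)) x}\<close>.\<close>
lemma uncountable_imp_two_sided_point:
  fixes S :: "(real^'d::finite) set"
  assumes "uncountable S"
  shows "\<exists>x\<in>S. \<exists>j. x \<in> closure {y\<in>S. y $ j < x $ j} \<and> x \<in> closure {y\<in>S. x $ j < y $ j}"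
proof (rule ccontr)
  assume "\<not> ?thesis"
  then have "S \<subseteq> (\<Union>\<sigma>. \<Union>m. {x\<in>S. one_sided_in S \<sigma> (inverse (Suc m)) x})"
    using one_sided_in_if_not_two_sided by (fastforce simp del: of_nat_Suc)
  moreover have "countable {x\<in>S. one_sided_in S \<sigma> e x}" if "e > 0" for \<sigma> e
    using sparse_imp_countable[OF open_UNIV uniform_discrete_imp_sparse[OF uniform_discrete_one_sided_in[OF that]]]
    by simp
  then have "countable (\<Union>\<sigma>. \<Union>m. {x\<in>S. one_sided_in S \<sigma> (inverse (Suc m)) x})"
    by (intro countable_UN countableI_type) simp
  ultimately have "countable S" by (rule countable_subset)
  with assms show False by simp
qed

lemma continuous_AE_eq_on_closure_support:
  fixes f g :: "'a::metric_space \<Rightarrow> 'b::t2_space"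
  assumes borel: "sets \<mu> = sets borel" and cont: "continuous_on UNIV g"
    and ae: "AE x in \<mu>. f x = g x" and U: "open U" and f: "\<And>x. x \<in> U \<Longrightarrow> f x = v"
    and y: "y \<in> closure (U \<inter> measure_support \<mu>)"
  shows "g y = v"
proof -
  have "g z = v" if z: "z \<in> U" "z \<in> measure_support \<mu>" for z
  proof (rule ccontr)
    assume "g z \<noteq> v"
    have "open (U \<inter> g -` (- {v}))"
      using U cont by (intro open_Int open_vimage) auto
    moreover have "z \<in> U \<inter> g -` (- {v})" using z \<open>g z \<noteq> v\<close> by simp
    ultimately obtain r where r: "r > 0" "ball z r \<subseteq> U \<inter> g -` (- {v})"
      using open_contains_ball_eq by blast
    have "ball z r \<in> sets \<mu>" using borel by simp
    moreover have "{x \<in> space \<mu>. \<not> x \<notin> ball z r} = ball z r"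
      using sets.sets_into_space[OF \<open>ball z r \<in> sets \<mu>\<close>] by auto
    moreover have "AE x in \<mu>. x \<notin> ball z r"
      using ae
    proof eventually_elim
      case (elim x)
      show ?case
      proof
        assume "x \<in> ball z r"
        then have "x \<in> U" "g x \<noteq> v" using r by auto
        with elim f show False by simp
      qed
    qed
    ultimately have "emeasure \<mu> (ball z r) = 0" by (simp add: AE_iff_measurable)
    with z r show False unfolding measure_support_def by auto
  qed
  then have "closure (U \<inter> measure_support \<mu>) \<subseteq> {x. g x = v}"
    by (intro closure_minimal closed_Collect_eq cont continuous_on_const) auto
  with y show ?thesis by auto
qed

lemma tendsto_nn_integral_powr_diff_zero:
  fixes f :: "'a \<Rightarrow> real"
  assumes fin: "finite_measure \<mu>" and [measurable]: "f \<in> borel_measurable \<mu>" "\<And>n. G n \<in> borel_measurable \<mu>"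
    and bound: "AE x in \<mu>. \<forall>n. \<bar>f x - G n x\<bar> \<le> W"
    and lim: "AE x in \<mu>. (\<lambda>n. G n x) \<longlonglongrightarrow> f x" and p: "p > 0"
  shows "(\<lambda>n. \<integral>\<^sup>+ x. ennreal (\<bar>f x - G n x\<bar> powr p) \<partial>\<mu>) \<longlonglongrightarrow> 0"
proof -
  have bound_powr: "AE x in \<mu>. norm (\<bar>f x - G n x\<bar> powr p) \<le> W powr p" for n
    using bound by eventually_elim (use p in \<open>auto intro: powr_mono2\<close>)
  have finite_integral: "(\<integral>\<^sup>+ x. ennreal (W powr p) \<partial>\<mu>) < \<infinity>"
    using finite_measure.emeasure_finite[OF fin, of "space \<mu>"]
    by (simp add: nn_integral_const ennreal_mult_less_top top.not_eq_extremum)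
  have "AE x in \<mu>. (\<lambda>n. \<bar>f x - G n x\<bar> powr p) \<longlonglongrightarrow> 0"
    using lim
  proof eventually_elim
    case (elim x)
    then have "(\<lambda>n. \<bar>f x - G n x\<bar>) \<longlonglongrightarrow> 0"
      using tendsto_rabs_zero[OF LIM_zero[OF elim]] by (simp add: abs_minus_commute)
    then show ?case using p by (intro tendsto_zero_powrI) auto
  qed
  then have "(\<lambda>n. \<integral>\<^sup>+ x. norm (0 - \<bar>f x - G n x\<bar> powr p) \<partial>\<mu>) \<longlonglongrightarrow> 0"
    by (intro nn_integral_dominated_convergence_norm[OF _ _ _ bound_powr finite_integral]) auto
  then show ?thesis by simp
qed

lemma tendsto_scaled_at_top_at_bot:
  fixes \<phi> :: "real \<Rightarrow> real"
  assumes top: "(\<phi> \<longlongrightarrow> b) at_top" and bot: "(\<phi> \<longlongrightarrow> a) at_bot"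
  shows "(\<lambda>n. \<phi> (real n * s)) \<longlonglongrightarrow> (if 0 < s then b else if s < 0 then a else \<phi> 0)"
proof -
  consider "0 < s" | "s < 0" | "s = 0" by linarith
  then show ?thesis
  proof cases
    case 1
    then have "filterlim (\<lambda>n. real n * s) at_top sequentially"
      by (intro filterlim_at_top_mult_tendsto_pos[OF tendsto_const] filterlim_real_sequentially)
    with 1 show ?thesis using filterlim_compose[OF top] by simp
  next
    case 2
    then have "filterlim (\<lambda>n. s * real n) at_bot sequentially"
      by (intro filterlim_tendsto_neg_mult_at_bot[OF tendsto_const] filterlim_real_sequentially)
    then have "filterlim (\<lambda>n. real n * s) at_bot sequentially" by (simp add: mult.commute)
    with 2 show ?thesis using filterlim_compose[OF bot] by simp
  qed simp
qed

lemma RNN_tendsto_step_function: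
  fixes \<rho> :: "real \<Rightarrow> real" and f :: "real^'d::finite \<Rightarrow> real"
  assumes cont: "continuous_on UNIV \<rho>" and der: "(\<rho> has_real_derivative D) (at x0)" and D: "D \<noteq> 0"
    and Ns: "Ns \<noteq> []" "\<forall>n\<in>set Ns. 0 < n" and K: "K \<le> last Ns"
    and top: "(shallow_net \<rho> K c0 c (\<lambda>_. 1) e \<longlongrightarrow> b) at_top"
    and bot: "(shallow_net \<rho> K c0 c (\<lambda>_. 1) e \<longlongrightarrow> a) at_bot"
    and f: "\<And>x. f x = (if t < x $ j then b else if x $ j < t then a else shallow_net \<rho> K c0 c (\<lambda>_. 1) e 0)"
  shows "\<exists>G W. (\<forall>n. G n \<in> RNN \<rho> Ns) \<and> (\<forall>n x. \<bar>x $ j\<bar> \<le> R \<longrightarrow> \<bar>f x - G n x\<bar> \<le> W) \<and>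
    (\<forall>x. \<bar>x $ j\<bar> \<le> R \<longrightarrow> (\<lambda>n. G n x) \<longlonglongrightarrow> f x)"
proof -
  define \<phi> where "\<phi> = shallow_net \<rho> K c0 c (\<lambda>_. 1) e"
  have "bounded (range \<phi>)"
    unfolding \<phi>_def by (rule bounded_range_if_tendsto_at_top_at_bot[OF continuous_on_shallow_net[OF cont] top bot])
  then obtain M where M: "\<And>z. \<bar>\<phi> z\<bar> \<le> M" by (auto simp: bounded_iff)
  have scaled: "shallow_net \<rho> K c0 c (\<lambda>_. real n) (\<lambda>k. e k - real n * t) s = \<phi> (real n * (s - t))" for n s
    using shallow_net_affine_input[of \<rho> K c0 c "\<lambda>_. 1" "real n" "- real n * t" e s]
    by (simp add: \<phi>_def algebra_simps)
  have "\<exists>g\<in>RNN \<rho> Ns. \<forall>x::real^'d. \<bar>x $ j\<bar> \<le> R \<longrightarrow> \<bar>g x - \<phi> (real n * (x $ j - t))\<bar> \<le> inverse (Suc n)" for n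
    using RNN_approximates_shallow_net[OF cont der D Ns K, of "inverse (Suc n)" j R c0 c
        "\<lambda>_. real n" "\<lambda>k. e k - real n * t"]
    unfolding scaled by simp
  then obtain G where G: "\<And>n. G n \<in> RNN \<rho> Ns" and approx: "\<And>n x. \<bar>x $ j\<bar> \<le> R \<Longrightarrow>
      \<bar>G n x - \<phi> (real n * (x $ j - t))\<bar> \<le> inverse (Suc n)"
    by metis
  have "\<bar>f x - G n x\<bar> \<le> \<bar>a\<bar> + \<bar>b\<bar> + \<bar>\<phi> 0\<bar> + M + 1" if "\<bar>x $ j\<bar> \<le> R" for n x
  proof -
    have "inverse (real (Suc n)) \<le> 1" by (simp add: inverse_le_1_iff)
    moreover have "\<bar>f x\<bar> \<le> \<bar>a\<bar> + \<bar>b\<bar> + \<bar>\<phi> 0\<bar>" by (simp add: f \<phi>_def)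
    ultimately show ?thesis using approx[OF that, of n] M[of "real n * (x $ j - t)"] by linarith
  qed
  moreover have "(\<lambda>n. G n x) \<longlonglongrightarrow> f x" if "\<bar>x $ j\<bar> \<le> R" for x
  proof -
    have "(\<lambda>n. \<phi> (real n * (x $ j - t))) \<longlonglongrightarrow> f x"
      using tendsto_scaled_at_top_at_bot[OF top bot, of "x $ j - t"] unfolding f \<phi>_def
      by (cases "t < x $ j"; cases "x $ j < t") simp_all
    moreover have "(\<lambda>n. G n x - \<phi> (real n * (x $ j - t))) \<longlonglongrightarrow> 0"
      by (rule Lim_null_comparison[OF _ LIMSEQ_inverse_real_of_nat]) (use approx[OF that] in auto)
    ultimately show ?thesis using tendsto_add by fastforce
  qed
  ultimately show ?thesis using G by blast
qed

lemma exists_nn_integral_powr_diff_less_if_AE_tendsto: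
  fixes f :: "'a \<Rightarrow> real"
  assumes fin: "finite_measure \<mu>" and [measurable]: "f \<in> borel_measurable \<mu>" "\<And>n. G n \<in> borel_measurable \<mu>"
    and bound: "AE x in \<mu>. \<forall>n. \<bar>f x - G n x\<bar> \<le> W"
    and lim: "AE x in \<mu>. (\<lambda>n. G n x) \<longlonglongrightarrow> f x" and p: "p > 0" and \<epsilon>: "\<epsilon> > 0"
  shows "\<exists>n. (\<integral>\<^sup>+ x. ennreal (\<bar>f x - G n x\<bar> powr p) \<partial>\<mu>) < ennreal \<epsilon>"
proof -
  have "eventually (\<lambda>n. (\<integral>\<^sup>+ x. ennreal (\<bar>f x - G n x\<bar> powr p) \<partial>\<mu>) < ennreal \<epsilon>) sequentially"
    using \<epsilon> by (intro order_tendstoD(2)[OF tendsto_nn_integral_powr_diff_zero[OF assms(1-5) p]]) auto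
  then show ?thesis by (auto simp: eventually_sequentially)
qed

lemma RNN_borel_measurable:
  fixes g :: "real^'d::finite \<Rightarrow> real"
  assumes "sets \<mu> = sets borel" and "continuous_on UNIV \<rho>" and "g \<in> RNN \<rho> Ns"
  shows "g \<in> borel_measurable \<mu>"
  using borel_measurable_continuous_onI[OF RNN_continuous[OF assms(2,3)]]
  by (simp add: measurable_cong_sets[OF assms(1) refl])

lemma AE_abs_component_le_if_null_outside_cube:
  fixes \<mu> :: "(real^'d::finite) measure"
  assumes borel: "sets \<mu> = sets borel" and null: "emeasure \<mu> (UNIV - cube B) = 0"
  shows "AE x in \<mu>. \<bar>x $ j\<bar> \<le> B"
proof -
  have "closed (cube B :: (real^'d) set)"
    unfolding cube_def by (intro closed_Collect_all closed_Collect_le continuous_intros)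
  then have "AE x in \<mu>. x \<in> cube B"
    using null borel by (intro AE_I'[of "UNIV - cube B"]) (auto simp: null_sets_def)
  then show ?thesis by eventually_elim (simp add: cube_def)
qed

lemma step_not_AE_eq_continuous:
  fixes f g :: "real^'d::finite \<Rightarrow> real"
  assumes borel: "sets \<mu> = sets borel" and cont: "continuous_on UNIV g"
    and below: "xs \<in> closure {y \<in> measure_support \<mu>. y $ j < xs $ j}"
    and above: "xs \<in> closure {y \<in> measure_support \<mu>. xs $ j < y $ j}"
    and f_below: "\<And>x. x $ j < xs $ j \<Longrightarrow> f x = a" and f_above: "\<And>x. xs $ j < x $ j \<Longrightarrow> f x = b"
    and "a \<noteq> b"
  shows "\<not> (AE x in \<mu>. f x = g x)"
proof
  assume ae: "AE x in \<mu>. f x = g x"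
  have halfspaces: "open {y::real^'d. y $ j < xs $ j}" "open {y::real^'d. xs $ j < y $ j}"
    by (intro open_Collect_less continuous_intros)+
  have "g xs = a"
    using below halfspaces f_below
    by (intro continuous_AE_eq_on_closure_support[OF borel cont ae, of "{y. y $ j < xs $ j}"])
      (auto simp: Collect_conj_eq Int_commute)
  moreover have "g xs = b"
    using above halfspaces f_above
    by (intro continuous_AE_eq_on_closure_support[OF borel cont ae, of "{y. xs $ j < y $ j}"])
      (auto simp: Collect_conj_eq Int_commute)
  ultimately show False using \<open>a \<noteq> b\<close> by simp
qed

theorem theorem3p1:
  fixes \<rho> :: "real \<Rightarrow> real" and Ns :: "nat list" and B :: real
    and \<mu> :: "(real^'d::finite) measure"
  assumes L2: "Ns \<noteq> []"
    and widths: "\<forall>n\<in>set Ns. 0 < n"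
    and cont: "continuous_on UNIV \<rho>" and incr: "mono \<rho>"
    and deriv0: "\<exists>x0 D. (\<rho> has_real_derivative D) (at x0) \<and> D \<noteq> 0"
    and diff_far: "\<exists>r>0. \<forall>x. r < \<bar>x\<bar> \<longrightarrow> \<rho> differentiable (at x)"
    and cond_iv: "(\<exists>lp lm'. 0 \<le> lp \<and> 0 \<le> lm' \<and> lp \<noteq> lm' \<and>
                       (deriv \<rho> \<longlongrightarrow> lp) at_top \<and> (deriv \<rho> \<longlongrightarrow> lm') at_bot \<and> 2 \<le> last Ns)
                  \<or> bounded (range \<rho>)"
    and Bpos: "B > 0"
    and fin: "finite_measure \<mu>" and borel: "sets \<mu> = sets borel"
    and on_cube: "emeasure \<mu> (UNIV - cube B) = 0"
    and supp: "uncountable (measure_support \<mu>)"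
  shows "\<exists>f. f \<in> borel_measurable \<mu> \<and> (\<exists>C. AE x in \<mu>. \<bar>f x\<bar> \<le> C) \<and>
           (\<forall>p::real. 0 < p \<longrightarrow>
              (\<forall>\<epsilon>::real. \<epsilon> > 0 \<longrightarrow> (\<exists>g\<in>RNN \<rho> Ns.
                  (\<integral>\<^sup>+ x. ennreal (\<bar>f x - g x\<bar> powr p) \<partial>\<mu>) < ennreal \<epsilon>))) \<and>
           \<not> (\<exists>g\<in>RNN \<rho> Ns. AE x in \<mu>. f x = g x)"
proof -
  obtain x0 D where der: "(\<rho> has_real_derivative D) (at x0)" and D: "D \<noteq> 0" using deriv0 by blast
  obtain K c0 c e a b where K: "K \<le> last Ns" and "a \<noteq> b"
    and top: "(shallow_net \<rho> K c0 c (\<lambda>_. 1) e \<longlongrightarrow> b) at_top"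
    and bot: "(shallow_net \<rho> K c0 c (\<lambda>_. 1) e \<longlongrightarrow> a) at_bot"
    using exists_step_like_shallow_net[OF cont incr der D diff_far L2 widths cond_iv] by blast
  obtain xs j where below: "xs \<in> closure {y \<in> measure_support \<mu>. y $ j < xs $ j}"
    and above: "xs \<in> closure {y \<in> measure_support \<mu>. xs $ j < y $ j}"
    using uncountable_imp_two_sided_point[OF supp] by blast
  define f where "f x = (if xs $ j < x $ j then b else if x $ j < xs $ j then a
    else shallow_net \<rho> K c0 c (\<lambda>_. 1) e 0)" for x :: "real^'d"
  obtain G W where G: "\<And>n. G n \<in> RNN \<rho> Ns" and bound: "\<And>n x. \<bar>x $ j\<bar> \<le> B \<Longrightarrow> \<bar>f x - G n x\<bar> \<le> W"
    and lim: "\<And>x. \<bar>x $ j\<bar> \<le> B \<Longrightarrow> (\<lambda>n. G n x) \<longlonglongrightarrow> f x"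
    using RNN_tendsto_step_function[OF cont der D L2 widths K top bot f_def, of B] by blast
  have f_meas: "f \<in> borel_measurable \<mu>"
    unfolding measurable_cong_sets[OF borel refl] f_def by measurable
  have G_meas: "G n \<in> borel_measurable \<mu>" for n
    by (rule RNN_borel_measurable[OF borel cont G])
  have AE_bound: "AE x in \<mu>. \<forall>n. \<bar>f x - G n x\<bar> \<le> W" and AE_lim: "AE x in \<mu>. (\<lambda>n. G n x) \<longlonglongrightarrow> f x"
    using AE_abs_component_le_if_null_outside_cube[OF borel on_cube, of j]
    by (simp_all add: bound lim eventually_mono)
  have "\<exists>g\<in>RNN \<rho> Ns. (\<integral>\<^sup>+ x. ennreal (\<bar>f x - g x\<bar> powr p) \<partial>\<mu>) < ennreal \<epsilon>"
    if "p > 0" "\<epsilon> > 0" for p \<epsilon> :: real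
    using exists_nn_integral_powr_diff_less_if_AE_tendsto[OF fin f_meas G_meas AE_bound AE_lim that] G by blast
  moreover have "\<not> (AE x in \<mu>. f x = g x)" if "g \<in> RNN \<rho> Ns" for g
    by (rule step_not_AE_eq_continuous[OF borel RNN_continuous[OF cont that] below above])
      (auto simp: f_def \<open>a \<noteq> b\<close>)
  moreover have "\<bar>f x\<bar> \<le> \<bar>a\<bar> + \<bar>b\<bar> + \<bar>shallow_net \<rho> K c0 c (\<lambda>_. 1) e 0\<bar>" for x
    by (simp add: f_def)
  ultimately show ?thesis using f_meas by blast
qed

end
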